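(* Let $\Sigma$ be a finite alphabet and let $C \subseteq \Sigma^n$ be a code with $|C|\ge 2$ and minimum Levenshtein distance $d$. Let $t_\mathsf{I}$ and $t_\mathsf{D}\le n$ be non-negative integers, let $N$ be a positive integer with $n - t_\mathsf{D} \le N \le n + t_\mathsf{I}$, let $v \in \Sigma^N$, and let $\ell = |B_\mathsf{L}(v, t_\mathsf{D}, t_\mathsf{I}) \cap C|$. If $$\left(n - \frac{d}{2}\right) t_\mathsf{I} < \left(\frac{d}{2} - t_\mathsf{D}\right)(n-t_\mathsf{D})$$ (equivalently, when $d<2n$, $t_\mathsf{I} < \frac{(d/2 - t_\mathsf{D})(n-t_\mathsf{D})}{n - d/2}$), then $$\ell \leq \frac{(d/2)(n+t_\mathsf{I})}{(d/2-t_\mathsf{D})(n-t_\mathsf{D})-(n-d/2)t_\mathsf{I}}.$$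
   Context: For words $x,y$ over $\Sigma$ (possibly of different lengths), the Levenshtein distance $d_\mathsf{L}(x,y)$ is the minimum number of single-symbol insertions and deletions needed to transform $x$ into $y$. The minimum Levenshtein distance of a code $C$ is $\min\{d_\mathsf{L}(c_1,c_2): c_1\neq c_2 \in C\}$. For a word $v$ and non-negative integers $a,b$, $B_\mathsf{L}(v,a,b)$ denotes the set of all words obtainable from $v$ by at most $a$ insertions and at most $b$ deletions. *)

theory Defs
  imports Complex_Main
begin

text \<open>The alphabet Sigma is the finite type 'a; words are lists over 'a.
  edits x i j y: y is obtained from x by exactly i single-symbol insertions
  and j single-symbol deletions (in any order).\<close>

inductive edits :: "'a list \<Rightarrow> nat \<Rightarrow> nat \<Rightarrow> 'a list \<Rightarrow> bool" where
  refl: "edits x 0 0 x"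
| ins: "edits x i j (u @ w) \<Longrightarrow> edits x (Suc i) j (u @ [a] @ w)"
| del: "edits x i j (u @ [a] @ w) \<Longrightarrow> edits x i (Suc j) (u @ w)"

definition lev_dist :: "'a list \<Rightarrow> 'a list \<Rightarrow> nat" where
  "lev_dist x y = (LEAST k. \<exists>i j. edits x i j y \<and> i + j = k)"

definition min_lev_dist :: "'a list set \<Rightarrow> nat" where
  "min_lev_dist C = Min {lev_dist c1 c2 | c1 c2. c1 \<in> C \<and> c2 \<in> C \<and> c1 \<noteq> c2}"

definition lev_ball :: "'a list \<Rightarrow> nat \<Rightarrow> nat \<Rightarrow> 'a list set" where
  "lev_ball v a b = {y. \<exists>i j. i \<le> a \<and> j \<le> b \<and> edits v i j y}"

end

theory Submission
  imports Defs "HOL-Library.Sublist" "HOL-Analysis.Convex"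
begin

(* A word c of length n in the ball around v (length N) shares with v a common subsequence
   occupying w = max (N - tI) (n - tD) positions S_c of v. For distinct codewords the positions
   S_c \<inter> S_c' carry a common subsequence of c and c', so d <= 2 (n - |S_c \<inter> S_c'|): the w-sets S_c
   pairwise meet in at most lam = n - d/2 positions. Double counting incidences between the N
   positions and the l sets, together with Cauchy-Schwarz, gives the Johnson-type inequality
   l w^2 <= N (w + (l - 1) lam); since N <= w + tI and w >= n - tD, this rearranges to the bound. *)

lemma subseq_nths_mono: "A \<subseteq> B \<Longrightarrow> subseq (nths xs A) (nths xs B)"
proof (induction xs arbitrary: A B)
  case Nil
  then show ?case by simp
next
  case (Cons a xs)
  have "{j. Suc j \<in> A} \<subseteq> {j. Suc j \<in> B}" using Cons.prems by auto
  then have "subseq (nths xs {j. Suc j \<in> A}) (nths xs {j. Suc j \<in> B})" by (rule Cons.IH)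
  then show ?case using Cons.prems by (auto simp: nths_Cons)
qed

lemma nths_inter_lessThan_length: "nths xs (A \<inter> {..<length xs}) = nths xs A"
  unfolding nths_def by (auto intro!: arg_cong[where f = "map fst"] filter_cong dest: set_zip_rightD)

lemma subseq_obtain_positions:
  assumes "subseq s xs"
  obtains S where "S \<subseteq> {..<length xs}" "card S = length s" "s = nths xs S"
proof -
  obtain A where A: "s = nths xs A" using assms subseq_conv_nths by blast
  let ?S = "A \<inter> {..<length xs}"
  have "?S = {i. i < length xs \<and> i \<in> A}" by auto
  then have "card ?S = length s" unfolding A length_nths by simp
  moreover have "s = nths xs ?S" unfolding A by (rule nths_inter_lessThan_length[symmetric])
  ultimately show ?thesis by (intro that[of ?S]) auto
qed

lemma subseq_longer_delete_elem:
  assumes "subseq xs ys" "length xs < length ys"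
  shows "\<exists>u a w. ys = u @ a # w \<and> subseq xs (u @ w)"
  using assms
proof (induction rule: list_emb.induct)
  case (list_emb_Nil ys)
  then obtain a w where "ys = a # w" by (cases ys) auto
  then show ?case by (intro exI[of _ "[]"]) auto
next
  case (list_emb_Cons xs ys y)
  then show ?case by (intro exI[of _ "[]"]) auto
next
  case (list_emb_Cons2 x y xs ys)
  then obtain u a w where "ys = u @ a # w" "subseq xs (u @ w)" by auto
  then show ?case using list_emb_Cons2 by (intro exI[of _ "y # u"]) auto
qed

lemma subseq_delete_elem_loses_one:
  assumes "subseq s (u @ a # w)"
  obtains s' where "subseq s' s" "subseq s' (u @ w)" "length s \<le> Suc (length s')"
proof -
  obtain s1 s2 where s: "s = s1 @ s2" "subseq s1 u" "subseq s2 (a # w)"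
    using assms by (auto elim: subseq_appendE)
  show ?thesis
  proof (cases "s2 \<noteq> [] \<and> hd s2 = a")
    case True
    then obtain s2' where "s2 = a # s2'" "subseq s2' w" using s(3) by (cases s2) auto
    then show ?thesis using that[of "s1 @ s2'"] s by (auto intro: list_emb_append_mono)
  next
    case False
    then have "subseq s2 w" using s(3) by (cases s2) auto
    then show ?thesis using that[of s] s by (auto intro: list_emb_append_mono)
  qed
qed

lemma edits_length: "edits x i j y \<Longrightarrow> length y + j = length x + i"
  by (induction rule: edits.induct) auto

lemma edits_common_subseq:
  "edits x i j y \<Longrightarrow> \<exists>s. subseq s x \<and> subseq s y \<and> length x \<le> length s + j"
proof (induction rule: edits.induct)
  case (refl x)
  show ?case by (intro exI[of _ x]) simp
next
  case (ins x i j u w a)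
  then obtain s where s: "subseq s x" "subseq s (u @ w)" "length x \<le> length s + j" by blast
  have "subseq (u @ w) (u @ [a] @ w)" by (simp add: subseq_append' list_emb_Cons)
  then have "subseq s (u @ [a] @ w)" using s(2) by (rule subseq_order.trans[rotated])
  then show ?case using s by blast
next
  case (del x i j u a w)
  then obtain s where s: "subseq s x" "subseq s (u @ a # w)" "length x \<le> length s + j" by auto
  obtain s' where s': "subseq s' s" "subseq s' (u @ w)" "length s \<le> Suc (length s')"
    using subseq_delete_elem_loses_one[OF s(2)] .
  have "subseq s' x" using s'(1) s(1) by (rule subseq_order.trans)
  then show ?case using s s' by (intro exI[of _ s']) simp
qed

lemma edits_insert_to_supersequence:
  "subseq y z \<Longrightarrow> edits x i j y \<Longrightarrow> edits x (i + (length z - length y)) j z"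
proof (induction "length z - length y" arbitrary: z)
  case 0
  then show ?case by (metis diff_is_0_eq list_emb_length subseq_same_length le_antisym add_0_right)
next
  case (Suc m)
  then obtain u a w where z: "z = u @ a # w" "subseq y (u @ w)"
    using subseq_longer_delete_elem by (metis zero_less_Suc zero_less_diff)
  moreover have "m = length (u @ w) - length y" using Suc.hyps z by simp
  ultimately have "edits x (i + m) j (u @ w)" using Suc.hyps(1) Suc.prems(2) by blast
  then have "edits x (Suc (i + m)) j (u @ [a] @ w)" by (rule edits.ins)
  moreover have "i + (length z - length y) = Suc (i + m)" using Suc.hyps by simp
  ultimately show ?case using z by simp
qed

lemma edits_delete_to_subsequence:
  "subseq z y \<Longrightarrow> edits x i j y \<Longrightarrow> edits x i (j + (length y - length z)) z"
proof (induction "length y - length z" arbitrary: y j)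
  case 0
  then show ?case by (metis diff_is_0_eq list_emb_length subseq_same_length le_antisym add_0_right)
next
  case (Suc m)
  then obtain u a w where y: "y = u @ a # w" "subseq z (u @ w)"
    using subseq_longer_delete_elem by (metis zero_less_Suc zero_less_diff)
  then have "edits x i (Suc j) (u @ w)" using Suc.prems by (metis append_Cons append_Nil edits.del)
  moreover have "m = length (u @ w) - length z" using Suc.hyps y by simp
  ultimately have "edits x i (Suc j + m) z" using Suc.hyps(1) y(2) by blast
  moreover have "j + (length y - length z) = Suc j + m" using Suc.hyps by simp
  ultimately show ?case by simp
qed

lemma lev_dist_le_common_subseq:
  assumes "subseq s x" "subseq s y"
  shows "lev_dist x y \<le> (length x - length s) + (length y - length s)"
proof -
  have "edits x 0 (length x - length s) s"
    using edits_delete_to_subsequence[OF assms(1) edits.refl] by simp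
  then have "edits x (length y - length s) (length x - length s) y"
    using edits_insert_to_supersequence[OF assms(2)] by fastforce
  then show ?thesis unfolding lev_dist_def by (intro Least_le) (metis add.commute)
qed

lemma lev_ball_common_positions:
  assumes "y \<in> lev_ball x a b" "w \<le> max (length x - b) (length y - a)"
  obtains S where "S \<subseteq> {..<length x}" "card S = w" "subseq (nths x S) y"
proof -
  obtain i j where ij: "i \<le> a" "j \<le> b" "edits x i j y"
    using assms(1) unfolding lev_ball_def by blast
  obtain s where s: "subseq s x" "subseq s y" "length x \<le> length s + j"
    using edits_common_subseq[OF ij(3)] by blast
  have "w \<le> length s" using assms(2) ij s edits_length[OF ij(3)] by linarith
  then have "length (take w s) = w" by simp
  moreover have "subseq (take w s) s" by auto
  ultimately obtain S where "S \<subseteq> {..<length x}" "card S = w" "take w s = nths x S"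
    using s(1) subseq_obtain_positions by (metis subseq_order.trans)
  then show ?thesis using that s(2) \<open>subseq (take w s) s\<close> by (metis subseq_order.trans)
qed

lemma card_common_positions_le:
  assumes "S \<subseteq> {..<length x}" "subseq (nths x S) y" "subseq (nths x S') y'"
    and "length y = n" "length y' = n" "d \<le> lev_dist y y'"
  shows "real (card (S \<inter> S')) \<le> real n - real d / 2"
proof -
  let ?s = "nths x (S \<inter> S')"
  have "subseq ?s y" "subseq ?s y'"
    using assms(2,3) subseq_nths_mono[of "S \<inter> S'"] by (meson inf_le1 inf_le2 subseq_order.trans)+
  then have "d \<le> (n - length ?s) + (n - length ?s)" "length ?s \<le> n"
    using lev_dist_le_common_subseq assms(4-6) list_emb_length by fastforce+
  moreover have "length ?s = card (S \<inter> S')"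
    using assms(1) by (auto simp: length_nths intro!: arg_cong[where f = card])
  ultimately show ?thesis by linarith
qed

lemma finite_lists_of_length: "\<forall>c\<in>C. length c = n \<Longrightarrow> finite (C :: 'a::finite list set)"
  by (rule finite_subset[OF _ finite_lists_length_eq[of UNIV n]]) auto

lemma min_lev_dist_le:
  assumes "finite C" "c \<in> C" "c' \<in> C" "c \<noteq> c'"
  shows "min_lev_dist C \<le> lev_dist c c'"
proof -
  have "{lev_dist c1 c2 | c1 c2. c1 \<in> C \<and> c2 \<in> C \<and> c1 \<noteq> c2} \<subseteq> case_prod lev_dist ` (C \<times> C)"
    by auto
  then have "finite {lev_dist c1 c2 | c1 c2. c1 \<in> C \<and> c2 \<in> C \<and> c1 \<noteq> c2}"
    using assms(1) by (meson finite_SigmaI finite_imageI finite_subset)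
  then show ?thesis unfolding min_lev_dist_def using assms by (intro Min_le) auto
qed

lemma min_lev_dist_le_twice_length:
  assumes "finite C" "card C \<ge> 2" "\<forall>c\<in>C. length c = n"
  shows "min_lev_dist C \<le> 2 * n"
proof -
  have "\<exists>c\<in>C. \<exists>c'\<in>C. c \<noteq> c'" using assms(1,2) card_le_Suc0_iff_eq by fastforce
  then obtain c c' where "c \<in> C" "c' \<in> C" "c \<noteq> c'" by blast
  moreover have "lev_dist c c' \<le> n + n" if "c \<in> C" "c' \<in> C"
    using lev_dist_le_common_subseq[of "[]" c c'] that assms(3) by simp
  ultimately show ?thesis using min_lev_dist_le[OF assms(1)] by fastforce
qed

lemma uniform_family_pairwise_inter_bound:
  fixes S :: "'b \<Rightarrow> 'c set" and lam :: real
  assumes "finite P" "finite L" "L \<noteq> {}"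
    and sub: "\<And>c. c \<in> L \<Longrightarrow> S c \<subseteq> P"
    and card: "\<And>c. c \<in> L \<Longrightarrow> card (S c) = w"
    and inter: "\<And>c c'. c \<in> L \<Longrightarrow> c' \<in> L \<Longrightarrow> c \<noteq> c' \<Longrightarrow> real (card (S c \<inter> S c')) \<le> lam"
  shows "real (card L) * real w ^ 2 \<le> real (card P) * (real w + (real (card L) - 1) * lam)"
proof -
  define m where "m p = (\<Sum>c\<in>L. of_bool (p \<in> S c) :: real)" for p
  have pairs: "(\<Sum>p\<in>P. of_bool (p \<in> S c) * of_bool (p \<in> S c')) = real (card (S c \<inter> S c'))"
    if "c \<in> L" for c c'
  proof -
    have "P \<inter> {p. p \<in> S c \<and> p \<in> S c'} = S c \<inter> S c'" using sub[OF that] by auto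
    then show ?thesis using \<open>finite P\<close> by (simp flip: of_bool_conj)
  qed
  have "(\<Sum>p\<in>P. m p) = (\<Sum>c\<in>L. \<Sum>p\<in>P. of_bool (p \<in> S c))"
    unfolding m_def by (rule sum.swap)
  also have "\<dots> = real (card L) * real w"
    using sub card \<open>finite P\<close> by (simp add: Int_absorb1)
  finally have sum_m: "(\<Sum>p\<in>P. m p) = real (card L) * real w" .
  have "(\<Sum>p\<in>P. (m p)\<^sup>2) = (\<Sum>c\<in>L. \<Sum>c'\<in>L. \<Sum>p\<in>P. of_bool (p \<in> S c) * of_bool (p \<in> S c'))"
    unfolding m_def power2_eq_square sum_product by (simp add: sum.swap[of _ P])
  also have "\<dots> = (\<Sum>c\<in>L. real w + (\<Sum>c'\<in>L - {c}. real (card (S c \<inter> S c'))))"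
    using pairs card \<open>finite L\<close> by (simp add: sum.remove)
  also have "\<dots> \<le> (\<Sum>c\<in>L. real w + (real (card L) - 1) * lam)"
  proof (intro sum_mono add_left_mono)
    fix c assume "c \<in> L"
    then have "(\<Sum>c'\<in>L - {c}. real (card (S c \<inter> S c'))) \<le> real (card (L - {c})) * lam"
      using inter by (intro sum_bounded_above) auto
    moreover have "card L \<ge> 1" using \<open>finite L\<close> \<open>L \<noteq> {}\<close> by (simp add: Suc_leI card_gt_0_iff)
    ultimately show "(\<Sum>c'\<in>L - {c}. real (card (S c \<inter> S c'))) \<le> (real (card L) - 1) * lam"
      using \<open>c \<in> L\<close> \<open>finite L\<close> by (simp add: of_nat_diff)
  qed
  finally have sum_m2: "(\<Sum>p\<in>P. (m p)\<^sup>2) \<le> real (card L) * (real w + (real (card L) - 1) * lam)"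
    by simp
  have "(real (card L) * real w)\<^sup>2 \<le> real (card P) * (real (card L) * (real w + (real (card L) - 1) * lam))"
    using sum_squared_le_sum_of_squares[of m P] sum_m sum_m2
    by (metis (no_types, lifting) mult.commute mult_left_mono of_nat_0_le_iff order_trans)
  then have "real (card L) * (real (card L) * real w ^ 2)
      \<le> real (card L) * (real (card P) * (real w + (real (card L) - 1) * lam))"
    by (simp add: power_mult_distrib power2_eq_square ac_simps)
  then show ?thesis using \<open>finite L\<close> \<open>L \<noteq> {}\<close> by (simp add: card_gt_0_iff)
qed

lemma list_size_excess_bound:
  fixes l w N t lam :: real
  assumes "1 \<le> l" "l * w\<^sup>2 \<le> N * (w + (l - 1) * lam)" "N \<le> w + t" "0 \<le> lam" "lam \<le> w"
  shows "(l - 1) * (w * (w - lam) - t * lam) \<le> t * w"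
proof -
  have "l * (w\<^sup>2 - (w + t) * lam) \<le> l * (w\<^sup>2 - N * lam)"
    using assms(1,3,4) by (intro mult_left_mono) (auto intro: mult_right_mono)
  also have "\<dots> \<le> N * (w - lam)" using assms(2) by (simp add: algebra_simps)
  also have "\<dots> \<le> (w + t) * (w - lam)" using assms(3,5) by (intro mult_right_mono) auto
  finally show ?thesis by (simp add: algebra_simps power2_eq_square)
qed

(* The bound (l - 1) <= t w / (w (w - lam) - t lam) weakens as w decreases. *)
lemma list_size_excess_bound_antimono:
  fixes l w w0 t lam :: real
  assumes "(l - 1) * (w * (w - lam) - t * lam) \<le> t * w" "1 \<le> l" "w0 \<le> w"
    and "0 \<le> t" "0 \<le> lam" "lam \<le> w0" "0 < w0 * (w0 - lam) - t * lam"
  shows "(l - 1) * (w0 * (w0 - lam) - t * lam) \<le> t * w0"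
proof -
  define D D0 where "D = w * (w - lam) - t * lam" and "D0 = w0 * (w0 - lam) - t * lam"
  have "D - D0 = (w - w0) * (w + w0 - lam)" unfolding D_def D0_def by algebra
  moreover have "0 \<le> (w - w0) * (w + w0 - lam)" using assms(3,5,6) by (intro mult_nonneg_nonneg) auto
  ultimately have "D0 \<le> D" by linarith
  then have "0 < D" using assms(7) D0_def by linarith
  have "w * D0 - w0 * D = (w0 - w) * (w * w0 + t * lam)" unfolding D_def D0_def by algebra
  moreover have "0 \<le> w * w0 + t * lam" using assms(3-7) by (smt (verit) mult_nonneg_nonneg)
  ultimately have "w * D0 \<le> w0 * D" using assms(3) by (smt (verit) mult_nonpos_nonneg)
  have "((l - 1) * D0) * D = ((l - 1) * D) * D0" by simp
  also have "\<dots> \<le> (t * w) * D0" using assms(1,7) D_def D0_def by (intro mult_right_mono) auto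
  also have "\<dots> \<le> (t * w0) * D" using \<open>w * D0 \<le> w0 * D\<close> assms(4)
    by (metis mult.assoc mult_left_mono)
  finally show ?thesis using \<open>0 < D\<close> D0_def by simp
qed

lemma list_size_bound:
  fixes l w w0 n N t lam :: real
  assumes "1 \<le> l" "l * w\<^sup>2 \<le> N * (w + (l - 1) * lam)" "N \<le> w + t"
    and "w0 \<le> w" "w0 \<le> n" "0 \<le> w0" "0 \<le> t" "0 \<le> lam" "lam * t < (w0 - lam) * w0"
  shows "l \<le> (n - lam) * (n + t) / ((w0 - lam) * w0 - lam * t)"
proof -
  have "0 < (w0 - lam) * w0" using assms(7-9) by (smt (verit) mult_nonneg_nonneg)
  then have "lam < w0" using assms(6) by (simp add: zero_less_mult_iff)
  have "(l - 1) * (w * (w - lam) - t * lam) \<le> t * w"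
    using list_size_excess_bound assms(1-3,8) \<open>lam < w0\<close> assms(4) by simp
  then have "(l - 1) * ((w0 - lam) * w0 - lam * t) \<le> t * w0"
    using list_size_excess_bound_antimono assms \<open>lam < w0\<close> by (simp add: algebra_simps)
  then have "l * ((w0 - lam) * w0 - lam * t) \<le> (w0 + t) * (w0 - lam)"
    by (simp add: algebra_simps)
  also have "\<dots> \<le> (n + t) * (n - lam)" using assms(5-7) \<open>lam < w0\<close> by (intro mult_mono) auto
  finally show ?thesis using assms(9) by (simp add: pos_le_divide_eq mult.commute)
qed

lemma lev_ball_code_johnson_inequality:
  fixes C :: "'a list set"
  assumes "finite C" "\<forall>c\<in>C. length c = n" "lev_ball v a b \<inter> C \<noteq> {}"
  defines "w \<equiv> max (length v - b) (n - a)"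
  shows "real (card (lev_ball v a b \<inter> C)) * real w ^ 2
    \<le> real (length v) * (real w + (real (card (lev_ball v a b \<inter> C)) - 1)
                          * (real n - real (min_lev_dist C) / 2))"
proof -
  define L where "L = lev_ball v a b \<inter> C"
  have "\<forall>c\<in>L. \<exists>T. T \<subseteq> {..<length v} \<and> card T = w \<and> subseq (nths v T) c"
    using lev_ball_common_positions assms(2) unfolding L_def w_def by (metis IntE order_refl)
  then obtain S where S: "\<And>c. c \<in> L \<Longrightarrow> S c \<subseteq> {..<length v} \<and> card (S c) = w \<and> subseq (nths v (S c)) c"
    by metis
  have "real (card (S c \<inter> S c')) \<le> real n - real (min_lev_dist C) / 2"
    if "c \<in> L" "c' \<in> L" "c \<noteq> c'" for c c'
    using card_common_positions_le[of "S c" v c "S c'" c' n] S[OF that(1)] S[OF that(2)]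
      min_lev_dist_le[OF assms(1), of c c'] assms(2) that
    unfolding L_def by auto
  then show ?thesis
    using uniform_family_pairwise_inter_bound[of "{..<length v}" L S w] assms(1,3) S
    unfolding L_def by auto
qed

theorem mainTheorem2:
  fixes C :: "('a::finite) list set" and n d tI tD N :: nat and v :: "'a list"
  assumes "\<forall>c\<in>C. length c = n"
    and "card C \<ge> 2"
    and "min_lev_dist C = d"
    and "tD \<le> n"
    and "N > 0" and "n - tD \<le> N" and "N \<le> n + tI"
    and "length v = N"
    and "(real n - real d / 2) * real tI < (real d / 2 - real tD) * (real n - real tD)"
  shows "real (card (lev_ball v tD tI \<inter> C))
           \<le> (real d / 2) * (real n + real tI)
             / ((real d / 2 - real tD) * (real n - real tD) - (real n - real d / 2) * real tI)"
proof -
  define L where "L = lev_ball v tD tI \<inter> C"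
  have "finite C" using assms(1) by (rule finite_lists_of_length)
  then have "d \<le> 2 * n" using min_lev_dist_le_twice_length assms(1-3) by blast
  show ?thesis
  proof (cases "L = {}")
    case True
    then show ?thesis using assms(9) by (simp add: L_def)
  next
    case False
    then have "1 \<le> real (card L)"
      using \<open>finite C\<close> unfolding L_def by (simp add: Suc_leI card_gt_0_iff)
    moreover have "real (card L) * real (max (N - tI) (n - tD)) ^ 2
        \<le> real N * (real (max (N - tI) (n - tD)) + (real (card L) - 1) * (real n - real d / 2))"
      using lev_ball_code_johnson_inequality[OF \<open>finite C\<close> assms(1), of v tD tI] False assms(3,8)
      unfolding L_def by simp
    ultimately have "real (card L) \<le> (real n - (real n - real d / 2)) * (real n + real tI)
        / ((real n - real tD - (real n - real d / 2)) * (real n - real tD) - (real n - real d / 2) * real tI)"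
      using \<open>d \<le> 2 * n\<close> assms(4,9)
      by (intro list_size_bound[where w = "real (max (N - tI) (n - tD))" and N = N]) auto
    then show ?thesis by (simp add: L_def)
  qed
qed

end
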